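(* Let $(\mathcal R,\le,r)$ be a closed triple satisfying A.1–A.4 with $(\mathcal R,\le)$ a partial order with top element $\mathbb A$. Let $\mathcal C\subseteq\mathcal R$ be a filter on $(\mathcal R,\le)$ with basic Tukey reductions and $\mathcal V$ a nonprincipal ultrafilter on $\omega$ with $\mathcal V\le_T\mathcal C$. Then there are a front $\mathcal F$ on $\mathcal C$ and a function $f:\mathcal F\to\omega$ such that for every $Y\in\mathcal V$ there is $X\in\mathcal C$ with $f[\mathcal F|X]\subseteq Y$. Moreover, if $\mathcal C\restriction\mathcal F$ is a base for an ultrafilter on $\mathcal F$, then $\mathcal V=f(\langle\mathcal C\restriction\mathcal F\rangle)$.
   Context: Axioms A.1–A.4, $\le_{\rm fin}$, $\sqsubseteq$, depth, filters and "basic Tukey reductions" are as defined in the context of the p-point Tukey theorem: $r_n(A)$ are approximations, $\mathcal{AR}=\bigcup_n\{r_n(A)\}$; A.1: $r_0(A)=\emptyset$, distinct $A,B$ differ at some $r_n$, $r_n(A)=r_m(B)\Rightarrow n=m$ and equal earlier approximations; A.2: quasi-order $\le_{\rm fin}$ on $\mathcal{AR}$ with finite down-sets, $A\le B\iff\forall n\exists m\ r_n(A)\le_{\rm fin}r_m(B)$, and $a\sqsubset b\le_{\rm fin}c\Rightarrow\exists d\sqsubset c\ a\le_{\rm fin}d$; A.3 and A.4 as usual (nonemptiness/refinement of $[a,A]$ and one-step pigeonhole on $r_{|a|+1}[a,A]$). $\mathcal C$ has basic Tukey reductions if every monotone cofinal $f:\mathcal C\to\mathcal V$ ($\mathcal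 V$ nonprincipal ultrafilter on $\omega$) agrees on $\{Y\in\mathcal C:Y\le X\}$, for some $X\in\mathcal C$, with a monotone continuous $\tilde f:\mathcal R\to\mathcal P(\omega)$ given by $\tilde f(Y)=\bigcup_k\hat f(r_k(Y))$ for some $\hat f:\mathcal{AR}\to[\omega]^{<\omega}$ that is end-extension preserving along $\sqsubseteq$, monotone for $\le_{\rm fin}$, and satisfies $\hat f(s)\subseteq k$ whenever $\mathrm{depth}_{\mathbb A}(s)\le k$. Tukey: $\mathcal V\le_T\mathcal C$ means there is $g:\mathcal C\to\mathcal V$ mapping every cofinal subset of $(\mathcal C,\ge)$ onto a cofinal subset of $(\mathcal V,\supseteq)$. A front on $\mathcal C$ is $\mathcal F\subseteq\mathcal{AR}$ such that every $C\in\mathcal C$ has some $s\in\mathcal F$ with $s\sqsubseteq C$ (i.e. $s=r_n(C)$ for some $n$) and no member of $\mathcal F$ is a proper initial segment of another. $\mathcal F|X=\{a\in\mathcal F:a\le_{\rm fin}X\}$, $\mathcal C\restriction\mathcal F=\{\mathcal F|X:X\in\mathcal C\}$, $\langle\mathcal C\restriction\mathcal F\rangle$ the filter it generates, and $f(\mathcal U)=\{Z\subseteq\omega:f^{-1}[Z]\in\mathcal U\}$. *)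

theory Defs
  imports Main "HOL-Library.Extended_Nat"
begin

text \<open>A triple (R, le, r): R is a set of points of type 'x, le is the
  quasi-order on R, r A n is the n-th approximation of A (of type 'a).
  lefin is the finitization order on the approximations.\<close>

definition AR :: "'x set \<Rightarrow> ('x \<Rightarrow> nat \<Rightarrow> 'a) \<Rightarrow> 'a set" where
  "AR R r = {r A n | A n. A \<in> R}"

definition ARn :: "'x set \<Rightarrow> ('x \<Rightarrow> nat \<Rightarrow> 'a) \<Rightarrow> nat \<Rightarrow> 'a set" where
  "ARn R r n = {r A n | A. A \<in> R}"

text \<open>length |a| of an approximation (well defined by A.1)\<close>
definition alen :: "'x set \<Rightarrow> ('x \<Rightarrow> nat \<Rightarrow> 'a) \<Rightarrow> 'a \<Rightarrow> nat" where
  "alen R r a = (THE n. \<exists>A\<in>R. a = r A n)"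

definition sqle :: "'x set \<Rightarrow> ('x \<Rightarrow> nat \<Rightarrow> 'a) \<Rightarrow> 'a \<Rightarrow> 'a \<Rightarrow> bool" where
  "sqle R r a b = (\<exists>A\<in>R. \<exists>n m. n \<le> m \<and> a = r A n \<and> b = r A m)"

definition sqlt :: "'x set \<Rightarrow> ('x \<Rightarrow> nat \<Rightarrow> 'a) \<Rightarrow> 'a \<Rightarrow> 'a \<Rightarrow> bool" where
  "sqlt R r a b = (\<exists>A\<in>R. \<exists>n m. n < m \<and> a = r A n \<and> b = r A m)"

definition depth :: "('x \<Rightarrow> nat \<Rightarrow> 'a) \<Rightarrow> ('a \<Rightarrow> 'a \<Rightarrow> bool) \<Rightarrow> 'x \<Rightarrow> 'a \<Rightarrow> enat" where
  "depth r lefin B a =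
     (if \<exists>n. lefin a (r B n) then enat (LEAST n. lefin a (r B n)) else \<infinity>)"

definition intv :: "'x set \<Rightarrow> ('x \<Rightarrow> 'x \<Rightarrow> bool) \<Rightarrow> ('x \<Rightarrow> nat \<Rightarrow> 'a) \<Rightarrow> 'a \<Rightarrow> 'x \<Rightarrow> 'x set" where
  "intv R le r a B = {A \<in> R. le A B \<and> (\<exists>n. r A n = a)}"

text \<open>closedness of R as a subspace of AR^\<omega>\<close>
definition closed_triple :: "'x set \<Rightarrow> ('x \<Rightarrow> nat \<Rightarrow> 'a) \<Rightarrow> bool" where
  "closed_triple R r =
    (\<forall>s :: nat \<Rightarrow> 'a. (\<forall>n. \<exists>A\<in>R. \<forall>i\<le>n. r A i = s i) \<longrightarrow> (\<exists>A\<in>R. \<forall>i. r A i = s i))"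

definition axA1 :: "'x set \<Rightarrow> ('x \<Rightarrow> nat \<Rightarrow> 'a) \<Rightarrow> bool" where
  "axA1 R r =
    ((\<forall>A\<in>R. \<forall>B\<in>R. r A 0 = r B 0) \<and>
     (\<forall>A\<in>R. \<forall>B\<in>R. A \<noteq> B \<longrightarrow> (\<exists>n. r A n \<noteq> r B n)) \<and>
     (\<forall>A\<in>R. \<forall>B\<in>R. \<forall>n m. r A n = r B m \<longrightarrow> n = m \<and> (\<forall>i<n. r A i = r B i)))"

definition axA2 :: "'x set \<Rightarrow> ('x \<Rightarrow> 'x \<Rightarrow> bool) \<Rightarrow> ('x \<Rightarrow> nat \<Rightarrow> 'a) \<Rightarrow> ('a \<Rightarrow> 'a \<Rightarrow> bool) \<Rightarrow> bool" where
  "axA2 R le r lefin =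
    ((\<forall>a\<in>AR R r. lefin a a) \<and>
     (\<forall>a\<in>AR R r. \<forall>b\<in>AR R r. \<forall>c\<in>AR R r. lefin a b \<and> lefin b c \<longrightarrow> lefin a c) \<and>
     (\<forall>b\<in>AR R r. finite {a \<in> AR R r. lefin a b}) \<and>
     (\<forall>A\<in>R. \<forall>B\<in>R. le A B \<longleftrightarrow> (\<forall>n. \<exists>m. lefin (r A n) (r B m))) \<and>
     (\<forall>a\<in>AR R r. \<forall>b\<in>AR R r. \<forall>c\<in>AR R r. sqlt R r a b \<and> lefin b c \<longrightarrow>
        (\<exists>d\<in>AR R r. sqlt R r d c \<and> lefin a d)))"

definition axA3 :: "'x set \<Rightarrow> ('x \<Rightarrow> 'x \<Rightarrow> bool) \<Rightarrow> ('x \<Rightarrow> nat \<Rightarrow> 'a) \<Rightarrow> ('a \<Rightarrow> 'a \<Rightarrow> bool) \<Rightarrow> bool" where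
  "axA3 R le r lefin =
    ((\<forall>a\<in>AR R r. \<forall>B\<in>R. \<forall>d. depth r lefin B a = enat d \<longrightarrow>
        (\<forall>A\<in>intv R le r (r B d) B. intv R le r a A \<noteq> {})) \<and>
     (\<forall>a\<in>AR R r. \<forall>A\<in>R. \<forall>B\<in>R. \<forall>d. le A B \<and> intv R le r a A \<noteq> {} \<and> depth r lefin B a = enat d \<longrightarrow>
        (\<exists>A'\<in>intv R le r (r B d) B. intv R le r a A' \<noteq> {} \<and> intv R le r a A' \<subseteq> intv R le r a A)))"

definition axA4 :: "'x set \<Rightarrow> ('x \<Rightarrow> 'x \<Rightarrow> bool) \<Rightarrow> ('x \<Rightarrow> nat \<Rightarrow> 'a) \<Rightarrow> ('a \<Rightarrow> 'a \<Rightarrow> bool) \<Rightarrow> bool" where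
  "axA4 R le r lefin =
    (\<forall>a\<in>AR R r. \<forall>B\<in>R. \<forall>d. depth r lefin B a = enat d \<longrightarrow>
       (\<forall>Q. Q \<subseteq> ARn R r (alen R r a + 1) \<longrightarrow>
          (\<exists>A\<in>intv R le r (r B d) B.
             (\<lambda>C. r C (alen R r a + 1)) ` intv R le r a A \<subseteq> Q \<or>
             (\<lambda>C. r C (alen R r a + 1)) ` intv R le r a A \<subseteq> - Q)))"

definition partial_order_top :: "'x set \<Rightarrow> ('x \<Rightarrow> 'x \<Rightarrow> bool) \<Rightarrow> 'x \<Rightarrow> bool" where
  "partial_order_top R le T =
    ((\<forall>A\<in>R. le A A) \<and> (\<forall>A\<in>R. \<forall>B\<in>R. le A B \<and> le B A \<longrightarrow> A = B) \<and>
     (\<forall>A\<in>R. \<forall>B\<in>R. \<forall>C\<in>R. le A B \<and> le B C \<longrightarrow> le A C) \<and>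
     T \<in> R \<and> (\<forall>A\<in>R. le A T))"

definition poset_filter :: "'x set \<Rightarrow> ('x \<Rightarrow> 'x \<Rightarrow> bool) \<Rightarrow> 'x set \<Rightarrow> bool" where
  "poset_filter R le C =
    (C \<subseteq> R \<and> C \<noteq> {} \<and>
     (\<forall>X\<in>C. \<forall>Y\<in>R. le X Y \<longrightarrow> Y \<in> C) \<and>
     (\<forall>X\<in>C. \<forall>Y\<in>C. \<exists>Z\<in>C. le Z X \<and> le Z Y))"

definition ultrafilter_on :: "'b set \<Rightarrow> 'b set set \<Rightarrow> bool" where
  "ultrafilter_on S U =
    (U \<subseteq> Pow S \<and> S \<in> U \<and> {} \<notin> U \<and>
     (\<forall>Z\<in>U. \<forall>W. Z \<subseteq> W \<and> W \<subseteq> S \<longrightarrow> W \<in> U) \<and>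
     (\<forall>Z\<in>U. \<forall>W\<in>U. Z \<inter> W \<in> U) \<and>
     (\<forall>Z. Z \<subseteq> S \<longrightarrow> Z \<in> U \<or> S - Z \<in> U))"

definition nonprincipal_ultrafilter :: "nat set set \<Rightarrow> bool" where
  "nonprincipal_ultrafilter V = (ultrafilter_on UNIV V \<and> (\<forall>n. {n} \<notin> V))"

definition cofinal_down :: "('x \<Rightarrow> 'x \<Rightarrow> bool) \<Rightarrow> 'x set \<Rightarrow> 'x set \<Rightarrow> bool" where
  "cofinal_down le C D = (D \<subseteq> C \<and> (\<forall>X\<in>C. \<exists>Y\<in>D. le Y X))"

definition cofinal_sup :: "nat set set \<Rightarrow> nat set set \<Rightarrow> bool" where
  "cofinal_sup V W = (W \<subseteq> V \<and> (\<forall>Z\<in>V. \<exists>Y\<in>W. Y \<subseteq> Z))"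

definition cofinal_map :: "('x \<Rightarrow> 'x \<Rightarrow> bool) \<Rightarrow> 'x set \<Rightarrow> nat set set \<Rightarrow> ('x \<Rightarrow> nat set) \<Rightarrow> bool" where
  "cofinal_map le C V g =
    ((\<forall>X\<in>C. g X \<in> V) \<and> (\<forall>D. cofinal_down le C D \<longrightarrow> cofinal_sup V (g ` D)))"

definition tukey_le :: "nat set set \<Rightarrow> ('x \<Rightarrow> 'x \<Rightarrow> bool) \<Rightarrow> 'x set \<Rightarrow> bool" where
  "tukey_le V le C = (\<exists>g. cofinal_map le C V g)"

definition fin_sqle :: "nat set \<Rightarrow> nat set \<Rightarrow> bool" where
  "fin_sqle s t = (s \<subseteq> t \<and> (\<forall>x\<in>s. \<forall>y\<in>t - s. x < y))"

definition basic_tukey_reductions ::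
  "'x set \<Rightarrow> ('x \<Rightarrow> 'x \<Rightarrow> bool) \<Rightarrow> ('x \<Rightarrow> nat \<Rightarrow> 'a) \<Rightarrow> ('a \<Rightarrow> 'a \<Rightarrow> bool) \<Rightarrow> 'x \<Rightarrow> 'x set \<Rightarrow> bool" where
  "basic_tukey_reductions R le r lefin T C =
    (\<forall>V f. nonprincipal_ultrafilter V \<and> cofinal_map le C V f \<and>
           (\<forall>X\<in>C. \<forall>Y\<in>C. le X Y \<longrightarrow> f X \<subseteq> f Y) \<longrightarrow>
      (\<exists>X\<in>C. \<exists>fh :: 'a \<Rightarrow> nat set.
         (\<forall>s\<in>AR R r. finite (fh s)) \<and>
         (\<forall>s\<in>AR R r. \<forall>t\<in>AR R r. sqle R r s t \<longrightarrow> fin_sqle (fh s) (fh t)) \<and>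
         (\<forall>s\<in>AR R r. \<forall>t\<in>AR R r. lefin s t \<longrightarrow> fh s \<subseteq> fh t) \<and>
         (\<forall>s\<in>AR R r. \<forall>k. depth r lefin T s \<le> enat k \<longrightarrow> fh s \<subseteq> {..<k}) \<and>
         (\<forall>Y\<in>R. \<forall>Z\<in>R. le Y Z \<longrightarrow> (\<Union>k. fh (r Y k)) \<subseteq> (\<Union>k. fh (r Z k))) \<and>
         (\<forall>Y\<in>C. le Y X \<longrightarrow> f Y = (\<Union>k. fh (r Y k)))))"

definition front_on :: "'x set \<Rightarrow> ('x \<Rightarrow> nat \<Rightarrow> 'a) \<Rightarrow> 'x set \<Rightarrow> 'a set \<Rightarrow> bool" where
  "front_on R r C F =
    (F \<subseteq> AR R r \<and> (\<forall>X\<in>C. \<exists>n. r X n \<in> F) \<and>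
     (\<forall>a\<in>F. \<forall>b\<in>F. \<not> sqlt R r a b))"

definition lefinR :: "('x \<Rightarrow> nat \<Rightarrow> 'a) \<Rightarrow> ('a \<Rightarrow> 'a \<Rightarrow> bool) \<Rightarrow> 'a \<Rightarrow> 'x \<Rightarrow> bool" where
  "lefinR r lefin a X = (\<exists>n. lefin a (r X n))"

definition restr :: "('x \<Rightarrow> nat \<Rightarrow> 'a) \<Rightarrow> ('a \<Rightarrow> 'a \<Rightarrow> bool) \<Rightarrow> 'a set \<Rightarrow> 'x \<Rightarrow> 'a set" where
  "restr r lefin F X = {a \<in> F. lefinR r lefin a X}"

definition gen_filter :: "('x \<Rightarrow> nat \<Rightarrow> 'a) \<Rightarrow> ('a \<Rightarrow> 'a \<Rightarrow> bool) \<Rightarrow> 'x set \<Rightarrow> 'a set \<Rightarrow> 'a set set" where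
  "gen_filter r lefin C F = {Z. Z \<subseteq> F \<and> (\<exists>X\<in>C. restr r lefin F X \<subseteq> Z)}"

definition image_filter :: "'a set \<Rightarrow> ('a \<Rightarrow> nat) \<Rightarrow> 'a set set \<Rightarrow> nat set set" where
  "image_filter F f U = {Z. {a \<in> F. f a \<in> Z} \<in> U}"

end

theory Submission
  imports Defs
begin

text \<open>
  From a Tukey map g : C \<rightarrow> V we pass to its monotone hull
  X \<mapsto> \<Union>{g Y | Y \<in> C, Y \<le> X}, which is again a Tukey map and is monotone.
  Basic Tukey reductions then give a function fh on approximations, monotone
  for \<le>fin, such that below some X0 \<in> C the hull is X \<mapsto> \<Union>k fh(r_k X).
  Hence every X \<in> C has an approximation with nonempty fh-value, and every
  Y \<in> V contains \<Union>k fh(r_k X) for some X \<in> C.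
  The front F consists of the approximations s = r_n(A) at which fh first
  becomes nonempty along A, and f(s) = min fh(s).  Monotonicity of fh for
  \<le>fin yields f[F|X] \<subseteq> \<Union>k fh(r_k X), which gives the first claim.  The second
  claim is a general fact: if every member of an ultrafilter V has f-preimage
  in a proper filter U, then V is the image filter f(U).
\<close>

section \<open>Monotone Tukey maps\<close>

text \<open>A Tukey map sends everything below some X \<in> C into any prescribed Z \<in> V;
  otherwise the elements not mapped into Z would form a cofinal set.\<close>
lemma cofinal_map_below:
  assumes "cofinal_map le C V g" and "Z \<in> V"
  shows "\<exists>X\<in>C. \<forall>Y\<in>C. le Y X \<longrightarrow> g Y \<subseteq> Z"
proof (rule ccontr)
  assume "\<not> ?thesis"
  then have "cofinal_down le C {Y\<in>C. \<not> g Y \<subseteq> Z}"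
    unfolding cofinal_down_def by blast
  then have "cofinal_sup V (g ` {Y\<in>C. \<not> g Y \<subseteq> Z})"
    using assms(1) unfolding cofinal_map_def by blast
  then show False using assms(2) unfolding cofinal_sup_def by blast
qed

definition monotone_hull :: "('x \<Rightarrow> 'x \<Rightarrow> bool) \<Rightarrow> 'x set \<Rightarrow> ('x \<Rightarrow> nat set) \<Rightarrow> 'x \<Rightarrow> nat set" where
  "monotone_hull le C g X = \<Union>{g Y | Y. Y \<in> C \<and> le Y X}"

lemma monotone_hull_cofinal_map:
  assumes g: "cofinal_map le C V g"
    and refl: "\<And>X. X \<in> C \<Longrightarrow> le X X"
    and trans: "\<And>X Y Z. X \<in> C \<Longrightarrow> Y \<in> C \<Longrightarrow> Z \<in> C \<Longrightarrow> le X Y \<Longrightarrow> le Y Z \<Longrightarrow> le X Z"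
    and up: "\<And>Z W. Z \<in> V \<Longrightarrow> Z \<subseteq> W \<Longrightarrow> W \<in> V"
  shows "cofinal_map le C V (monotone_hull le C g)"
    and "\<forall>X\<in>C. \<forall>Y\<in>C. le X Y \<longrightarrow> monotone_hull le C g X \<subseteq> monotone_hull le C g Y"
proof -
  let ?h = "monotone_hull le C g"
  have mono: "?h X \<subseteq> ?h Y" if XY: "X \<in> C" "Y \<in> C" "le X Y" for X Y
  proof
    fix x assume "x \<in> ?h X"
    then obtain W where W: "W \<in> C" "le W X" "x \<in> g W" unfolding monotone_hull_def by blast
    then have "le W Y" using trans XY by blast
    then show "x \<in> ?h Y" using W unfolding monotone_hull_def by blast
  qed
  have in_V: "?h X \<in> V" if "X \<in> C" for X
  proof -
    have "g X \<subseteq> ?h X" using that refl unfolding monotone_hull_def by blast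
    moreover have "g X \<in> V" using g that unfolding cofinal_map_def by blast
    ultimately show ?thesis using up by blast
  qed
  have below: "\<exists>X\<in>C. \<forall>Y\<in>C. le Y X \<longrightarrow> ?h Y \<subseteq> Z" if "Z \<in> V" for Z
  proof -
    obtain X where X: "X \<in> C" "\<forall>Y\<in>C. le Y X \<longrightarrow> g Y \<subseteq> Z"
      using cofinal_map_below[OF g \<open>Z \<in> V\<close>] by blast
    have "?h Y \<subseteq> Z" if Y: "Y \<in> C" "le Y X" for Y
    proof
      fix x assume "x \<in> ?h Y"
      then obtain W where W: "W \<in> C" "le W Y" "x \<in> g W" unfolding monotone_hull_def by blast
      then have "le W X" using trans Y X(1) by blast
      then show "x \<in> Z" using W X(2) by blast
    qed
    then show ?thesis using X(1) by blast
  qed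
  have "cofinal_sup V (?h ` D)" if D: "cofinal_down le C D" for D
    unfolding cofinal_sup_def
  proof (intro conjI ballI)
    show "?h ` D \<subseteq> V" using D in_V unfolding cofinal_down_def by blast
  next
    fix Z assume "Z \<in> V"
    then obtain X where X: "X \<in> C" "\<forall>Y\<in>C. le Y X \<longrightarrow> ?h Y \<subseteq> Z" using below by blast
    then obtain Y where "Y \<in> D" "le Y X" using D unfolding cofinal_down_def by blast
    then show "\<exists>W\<in>?h ` D. W \<subseteq> Z" using X D unfolding cofinal_down_def by blast
  qed
  then show "cofinal_map le C V ?h" using in_V unfolding cofinal_map_def by blast
  show "\<forall>X\<in>C. \<forall>Y\<in>C. le X Y \<longrightarrow> ?h X \<subseteq> ?h Y" using mono by blast
qed

section \<open>The approximating function given by basic Tukey reductions\<close>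

lemma basic_tukey_approximation:
  assumes po: "partial_order_top R le T"
    and filt: "poset_filter R le C"
    and btr: "basic_tukey_reductions R le r lefin T C"
    and npu: "nonprincipal_ultrafilter V"
    and tuk: "tukey_le V le C"
  obtains fh :: "'a \<Rightarrow> nat set"
  where "\<forall>s\<in>AR R r. \<forall>t\<in>AR R r. lefin s t \<longrightarrow> fh s \<subseteq> fh t"
    and "\<forall>X\<in>C. \<exists>k. fh (r X k) \<noteq> {}"
    and "\<forall>Y\<in>V. \<exists>X\<in>C. (\<Union>k. fh (r X k)) \<subseteq> Y"
proof -
  have CR: "C \<subseteq> R" and dir: "\<And>X Y. X \<in> C \<Longrightarrow> Y \<in> C \<Longrightarrow> \<exists>Z\<in>C. le Z X \<and> le Z Y"
    using filt unfolding poset_filter_def by blast+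
  have C_refl: "\<And>X. X \<in> C \<Longrightarrow> le X X"
    and C_trans: "\<And>X Y Z. X \<in> C \<Longrightarrow> Y \<in> C \<Longrightarrow> Z \<in> C \<Longrightarrow> le X Y \<Longrightarrow> le Y Z \<Longrightarrow> le X Z"
    using po CR unfolding partial_order_top_def by blast+
  have up: "\<And>Z W. Z \<in> V \<Longrightarrow> Z \<subseteq> W \<Longrightarrow> W \<in> V" and nonempty: "{} \<notin> V"
    using npu unfolding nonprincipal_ultrafilter_def ultrafilter_on_def by blast+
  obtain g where "cofinal_map le C V g" using tuk unfolding tukey_le_def by blast
  define h where "h = monotone_hull le C g"
  have h_cof: "cofinal_map le C V h" and h_mono: "\<forall>X\<in>C. \<forall>Y\<in>C. le X Y \<longrightarrow> h X \<subseteq> h Y"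
    unfolding h_def
    using monotone_hull_cofinal_map[OF \<open>cofinal_map le C V g\<close> C_refl C_trans up] by simp_all
  obtain X0 fh where X0: "X0 \<in> C"
    and fh_lefin: "\<forall>s\<in>AR R r. \<forall>t\<in>AR R r. lefin s t \<longrightarrow> fh s \<subseteq> fh t"
    and fh_mono: "\<forall>Y\<in>R. \<forall>Z\<in>R. le Y Z \<longrightarrow> (\<Union>k. fh (r Y k)) \<subseteq> (\<Union>k. fh (r Z k))"
    and fh_h: "\<forall>Y\<in>C. le Y X0 \<longrightarrow> h Y = (\<Union>k. fh (r Y k))"
  proof -
    have "nonprincipal_ultrafilter V \<and> cofinal_map le C V h \<and>
        (\<forall>X\<in>C. \<forall>Y\<in>C. le X Y \<longrightarrow> h X \<subseteq> h Y)"
      using npu h_cof h_mono by blast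
    then have "\<exists>X\<in>C. \<exists>fh :: 'a \<Rightarrow> nat set.
         (\<forall>s\<in>AR R r. finite (fh s)) \<and>
         (\<forall>s\<in>AR R r. \<forall>t\<in>AR R r. sqle R r s t \<longrightarrow> fin_sqle (fh s) (fh t)) \<and>
         (\<forall>s\<in>AR R r. \<forall>t\<in>AR R r. lefin s t \<longrightarrow> fh s \<subseteq> fh t) \<and>
         (\<forall>s\<in>AR R r. \<forall>k. depth r lefin T s \<le> enat k \<longrightarrow> fh s \<subseteq> {..<k}) \<and>
         (\<forall>Y\<in>R. \<forall>Z\<in>R. le Y Z \<longrightarrow> (\<Union>k. fh (r Y k)) \<subseteq> (\<Union>k. fh (r Z k))) \<and>
         (\<forall>Y\<in>C. le Y X \<longrightarrow> h Y = (\<Union>k. fh (r Y k)))"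
      by (rule btr[unfolded basic_tukey_reductions_def, rule_format])
    then show ?thesis by (elim bexE exE conjE) (rule that)
  qed
  have "\<exists>k. fh (r X k) \<noteq> {}" if X: "X \<in> C" for X
  proof -
    obtain Z where Z: "Z \<in> C" "le Z X" "le Z X0" using dir X X0 by blast
    have "h Z \<in> V" using h_cof Z(1) unfolding cofinal_map_def by blast
    moreover have "h Z = (\<Union>k. fh (r Z k))" using fh_h Z by blast
    ultimately have "(\<Union>k. fh (r Z k)) \<noteq> {}" using nonempty by metis
    moreover have "(\<Union>k. fh (r Z k)) \<subseteq> (\<Union>k. fh (r X k))"
      using fh_mono Z(1,2) X CR by blast
    ultimately show ?thesis by blast
  qed
  moreover have "\<exists>X\<in>C. (\<Union>k. fh (r X k)) \<subseteq> Y" if "Y \<in> V" for Y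
  proof -
    obtain X1 where X1: "X1 \<in> C" "\<forall>W\<in>C. le W X1 \<longrightarrow> h W \<subseteq> Y"
      using cofinal_map_below[OF h_cof \<open>Y \<in> V\<close>] by blast
    obtain X where "X \<in> C" "le X X1" "le X X0" using dir X1(1) X0 by blast
    then have "(\<Union>k. fh (r X k)) = h X" using fh_h by blast
    also have "\<dots> \<subseteq> Y" using X1(2) \<open>X \<in> C\<close> \<open>le X X1\<close> by blast
    finally show ?thesis using \<open>X \<in> C\<close> by blast
  qed
  ultimately show thesis using that[OF fh_lefin] by blast
qed

section \<open>The front of first nonempty approximations\<close>

definition first_nonempty :: "'x set \<Rightarrow> ('x \<Rightarrow> nat \<Rightarrow> 'a) \<Rightarrow> ('a \<Rightarrow> nat set) \<Rightarrow> 'a set" where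
  "first_nonempty R r h =
     {s \<in> AR R r. h s \<noteq> {} \<and> (\<forall>A\<in>R. \<forall>n. s = r A n \<longrightarrow> (\<forall>i<n. h (r A i) = {}))}"

text \<open>If h becomes nonempty along every X \<in> C, these approximations form a
  front on C: A.1 guarantees that the least such approximation of X is
  also first along every other A through it, and no proper end-extension of a
  first nonempty approximation can be first.\<close>
lemma first_nonempty_front:
  assumes A1: "axA1 R r" and CR: "C \<subseteq> R"
    and ne: "\<forall>X\<in>C. \<exists>k. h (r X k) \<noteq> {}"
  shows "front_on R r C (first_nonempty R r h)"
  unfolding front_on_def
proof (intro conjI ballI)
  show "first_nonempty R r h \<subseteq> AR R r" unfolding first_nonempty_def by blast
next
  fix X assume X: "X \<in> C"
  then have XR: "X \<in> R" using CR by blast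
  have same_level: "\<forall>A\<in>R. \<forall>B\<in>R. \<forall>n m. r A n = r B m \<longrightarrow> n = m \<and> (\<forall>i<n. r A i = r B i)"
    using A1 unfolding axA1_def by blast
  define n where "n = (LEAST k. h (r X k) \<noteq> {})"
  have "\<exists>k. h (r X k) \<noteq> {}" using ne X by blast
  then have n_ne: "h (r X n) \<noteq> {}" unfolding n_def by (rule LeastI_ex)
  have before_n: "\<And>i. i < n \<Longrightarrow> h (r X i) = {}" unfolding n_def using not_less_Least by blast
  have "r X n \<in> first_nonempty R r h" unfolding first_nonempty_def
  proof (intro CollectI conjI ballI allI impI)
    show "r X n \<in> AR R r" using XR unfolding AR_def by blast
    show "h (r X n) \<noteq> {}" by (rule n_ne)
  next
    fix A m i assume A: "A \<in> R" "r X n = r A m" "i < m"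
    then have "n = m \<and> (\<forall>i<n. r X i = r A i)" using same_level XR by blast
    then show "h (r A i) = {}" using before_n A(3) by metis
  qed
  then show "\<exists>n. r X n \<in> first_nonempty R r h" by blast
next
  fix a b assume a: "a \<in> first_nonempty R r h" and b: "b \<in> first_nonempty R r h"
  show "\<not> sqlt R r a b"
  proof
    assume "sqlt R r a b"
    then obtain A n m where A: "A \<in> R" "n < m" "a = r A n" "b = r A m"
      unfolding sqlt_def by blast
    then have "h (r A n) = {}" using b unfolding first_nonempty_def by blast
    then show False using a A(3) unfolding first_nonempty_def by blast
  qed
qed

lemma least_image_restr:
  assumes h_lefin: "\<forall>s\<in>AR R r. \<forall>t\<in>AR R r. lefin s t \<longrightarrow> h s \<subseteq> h t"
    and X: "X \<in> R"
  shows "(\<lambda>s. LEAST x. x \<in> h s) ` restr r lefin (first_nonempty R r h) X \<subseteq> (\<Union>k. h (r X k))"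
proof
  fix y assume "y \<in> (\<lambda>s. LEAST x. x \<in> h s) ` restr r lefin (first_nonempty R r h) X"
  then obtain s where s: "s \<in> first_nonempty R r h" "lefinR r lefin s X"
    and y: "y = (LEAST x. x \<in> h s)"
    unfolding restr_def by blast
  obtain n where n: "lefin s (r X n)" using s(2) unfolding lefinR_def by blast
  have sAR: "s \<in> AR R r" and s_ne: "h s \<noteq> {}" using s(1) unfolding first_nonempty_def by blast+
  have "y \<in> h s" using s_ne y by (metis LeastI ex_in_conv)
  moreover have "r X n \<in> AR R r" using X unfolding AR_def by blast
  ultimately have "y \<in> h (r X n)" using h_lefin sAR n by blast
  then show "y \<in> (\<Union>k. h (r X k))" by blast
qed

section \<open>Image filters\<close>

lemma ultrafilter_eq_image_filter:
  assumes V: "ultrafilter_on UNIV V"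
    and U_int: "\<And>Z W. Z \<in> U \<Longrightarrow> W \<in> U \<Longrightarrow> Z \<inter> W \<in> U" and U_proper: "{} \<notin> U"
    and preimage: "\<forall>Y\<in>V. {a \<in> F. f a \<in> Y} \<in> U"
  shows "V = image_filter F f U"
proof (intro set_eqI iffI)
  fix Y assume "Y \<in> V"
  then show "Y \<in> image_filter F f U" using preimage unfolding image_filter_def by blast
next
  fix Y assume Y: "Y \<in> image_filter F f U"
  show "Y \<in> V"
  proof (rule ccontr)
    assume "Y \<notin> V"
    then have "UNIV - Y \<in> V" using V unfolding ultrafilter_on_def by blast
    then have "- Y \<in> V" by (simp add: Compl_eq_Diff_UNIV)
    then have "{a \<in> F. f a \<in> - Y} \<in> U" using preimage by blast
    then have "{a \<in> F. f a \<in> Y} \<inter> {a \<in> F. f a \<in> - Y} \<in> U"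
      using Y U_int unfolding image_filter_def by blast
    moreover have "{a \<in> F. f a \<in> Y} \<inter> {a \<in> F. f a \<in> - Y} = {}" by blast
    ultimately show False using U_proper by simp
  qed
qed

lemma preimage_in_gen_filter:
  assumes "X \<in> C" and "f ` restr r lefin F X \<subseteq> Y"
  shows "{a \<in> F. f a \<in> Y} \<in> gen_filter r lefin C F"
proof -
  have "restr r lefin F X \<subseteq> {a \<in> F. f a \<in> Y}"
    using assms(2) unfolding restr_def by blast
  then show ?thesis using assms(1) unfolding gen_filter_def by blast
qed

theorem mainTheorem8:
  fixes R :: "'x set" and le :: "'x \<Rightarrow> 'x \<Rightarrow> bool" and r :: "'x \<Rightarrow> nat \<Rightarrow> 'a"
    and lefin :: "'a \<Rightarrow> 'a \<Rightarrow> bool" and T :: 'x and C :: "'x set" and V :: "nat set set"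
  assumes "closed_triple R r"
    and "axA1 R r" and "axA2 R le r lefin" and "axA3 R le r lefin" and "axA4 R le r lefin"
    and "partial_order_top R le T"
    and "poset_filter R le C"
    and "basic_tukey_reductions R le r lefin T C"
    and "nonprincipal_ultrafilter V"
    and "tukey_le V le C"
  shows "\<exists>F (f :: 'a \<Rightarrow> nat). front_on R r C F \<and>
           (\<forall>Y\<in>V. \<exists>X\<in>C. f ` restr r lefin F X \<subseteq> Y) \<and>
           (ultrafilter_on F (gen_filter r lefin C F) \<longrightarrow>
              V = image_filter F f (gen_filter r lefin C F))"
proof -
  obtain fh :: "'a \<Rightarrow> nat set"
    where fh_lefin: "\<forall>s\<in>AR R r. \<forall>t\<in>AR R r. lefin s t \<longrightarrow> fh s \<subseteq> fh t"
      and fh_ne: "\<forall>X\<in>C. \<exists>k. fh (r X k) \<noteq> {}"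
      and fh_V: "\<forall>Y\<in>V. \<exists>X\<in>C. (\<Union>k. fh (r X k)) \<subseteq> Y"
    using basic_tukey_approximation[OF assms(6-10)] by blast
  have CR: "C \<subseteq> R" using assms(7) unfolding poset_filter_def by blast
  define F where "F = first_nonempty R r fh"
  define f where "f s = (LEAST x. x \<in> fh s)" for s
  have front: "front_on R r C F"
    unfolding F_def using first_nonempty_front[OF assms(2) CR fh_ne] .
  have approx: "\<forall>Y\<in>V. \<exists>X\<in>C. f ` restr r lefin F X \<subseteq> Y"
  proof
    fix Y assume "Y \<in> V"
    then obtain X where X: "X \<in> C" "(\<Union>k. fh (r X k)) \<subseteq> Y" using fh_V by blast
    have "f ` restr r lefin F X \<subseteq> (\<Union>k. fh (r X k))"
      unfolding F_def f_def[abs_def] using least_image_restr[OF fh_lefin subsetD[OF CR X(1)]] .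
    then show "\<exists>X\<in>C. f ` restr r lefin F X \<subseteq> Y" using X by blast
  qed
  have "V = image_filter F f (gen_filter r lefin C F)"
    if "ultrafilter_on F (gen_filter r lefin C F)"
  proof (rule ultrafilter_eq_image_filter)
    show "ultrafilter_on UNIV V" using assms(9) unfolding nonprincipal_ultrafilter_def by blast
    show "\<forall>Y\<in>V. {a \<in> F. f a \<in> Y} \<in> gen_filter r lefin C F"
    proof
      fix Y assume "Y \<in> V"
      then obtain X where "X \<in> C" "f ` restr r lefin F X \<subseteq> Y" using approx by blast
      then show "{a \<in> F. f a \<in> Y} \<in> gen_filter r lefin C F" by (rule preimage_in_gen_filter)
    qed
    show "\<And>Z W. Z \<in> gen_filter r lefin C F \<Longrightarrow> W \<in> gen_filter r lefin C F
        \<Longrightarrow> Z \<inter> W \<in> gen_filter r lefin C F"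
      and "{} \<notin> gen_filter r lefin C F"
      using that unfolding ultrafilter_on_def by blast+
  qed
  then show ?thesis using front approx by (intro exI[of _ F] exI[of _ f]) simp
qed

end
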